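(* Let $F$ be a CNF formula over variables $x_1,\dots,x_n$ with clauses $C_1,\dots,C_m$ of two or three literals each. Let $R$ be the triple set and $H=(V,A)$ the hypergraph constructed from $F$ as described in the context. If $P\subseteq A$ is an acyclic path in $H$ from $\alpha\beta$ to $c_{m+1}\gamma$, then $\mathrm{triples}(P)$ entails $\alpha\beta|\gamma$; that is, every rooted binary tree displaying all triples of $\mathrm{triples}(P)$ also displays $\alpha\beta|\gamma$.
   Context: **Triples and trees.** A rooted triple $pq|o$, with $p,q,o$ distinct leaves and unordered in $p,q$, is displayed by a rooted binary tree $T$ (leaf set containing $p,q,o$) if the path from $p$ to $q$ is node-disjoint from the path from $o$ to the root. **Triples and arcs.** The triple $pq|o$ corresponds to the hyperarc $\mathrm{arc}(pq|o)=\{p,q\}\to\{\{p,o\},\{q,o\}\}$, and $\mathrm{triples}(P)$ is the set of triples corresponding to the arcs of $P$. We write $pq$ for the node $\{p,q\}$. **Hypergraph notions.** A hyperarc $u\to\{v,v'\}$ has tail $u$ and heads $\{v,v'\}$. A path from $u_0$ to $u_\ell$ is a sequence of distinct arcs $(a_1,\dots,a_\ell)$ with $\mathrm{t}(a_1)=u_0$, $u_\ell\in\mathrm{h}(a_\ell)$, and $\mathrm{t}(a_{k+1})\in\mathrm{h}(a_k)$ for all $k$. It is acyclic if no $a_k$ has a head equal to $\mathrm{t}(a_{k'})$ with $k'<k$. **Construction.** Use leaves - $x_i^j,\bar x_i^j,y_i^j,\bar y_i^j$ for $i\in[n]$, $j\in[m]$; - $b_i,b'_i$ for $i\in[n+1]$;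 - $c_j,d_j$ for $j\in[m]$; - $c_{m+1}$, and $\alpha,\beta,\gamma$. The triple set $R$ is the union of the following groups. (i) For each $i\in[n]$: - $b_ib'_i|x_i^1$ and $b'_ix_i^1|y_i^1$; - $x_i^jy_i^j|x_i^{j+1}$ and $y_i^jx_i^{j+1}|y_i^{j+1}$ for $1\le j\le m-1$; - $x_i^my_i^m|b_{i+1}$ and $y_i^mb_{i+1}|b'_{i+1}$. (ii) For each $i\in[n]$: - $b_ib'_i|\bar x_i^1$ and $b'_i\bar x_i^1|\bar y_i^1$; - $\bar x_i^j\bar y_i^j|\bar x_i^{j+1}$ and $\bar y_i^j\bar x_i^{j+1}|\bar y_i^{j+1}$ for $1\le j\le m-1$; - $\bar x_i^m\bar y_i^m|b_{i+1}$ and $\bar x_i^mb_{i+1}|b'_{i+1}$. (iii) For each clause $C_j$: - for each positive occurrence of $x_i$ in $C_j$, the triples $c_jd_j|x_i^j$, $c_jx_i^j|y_i^j$, $c_jy_i^j|c_{j+1}$; - for each negative occurrence of $x_i$ in $C_j$, the same triples with $\bar x_i^j,\bar y_i^j$ in place of $x_i^j,y_i^j$; - if $j<m$, the triple $c_jc_{j+1}|d_{j+1}$. (iv) Connecting triples: $\alpha\beta|b_1$, $\beta b_1|b'_1$, $b_{n+1}b'_{n+1}|c_1$, $b'_{n+1}c_1|d_1$, $c_mc_{m+1}|\gamma$. Then $A=\{\mathrm{arc}(t):t\in R\}$, and $V$ is the set of leaf pairs occurring in arcs of $A$. *)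

theory Defs
  imports Main "HOL-Library.Sublist"
begin

datatype leaf =
    X nat nat
  | XB nat nat
  | Y nat nat
  | YB nat nat
  | B nat
  | B' nat
  | Cc nat
  | D nat
  | Alpha | Beta | Gamma

text \<open>A triple pq|o is represented as (p,q,r).\<close>
type_synonym 'a triple = "'a \<times> 'a \<times> 'a"
type_synonym 'a hyperarc = "'a set \<times> 'a set set"

definition arc :: "'a triple \<Rightarrow> 'a hyperarc" where
  "arc t = (case t of (p,q,r) \<Rightarrow> ({p,q}, {{p,r},{q,r}}))"

definition tail :: "'a hyperarc \<Rightarrow> 'a set" where "tail a = fst a"
definition heads :: "'a hyperarc \<Rightarrow> 'a set set" where "heads a = snd a"

definition triples :: "'a hyperarc set \<Rightarrow> 'a triple set" where
  "triples P = {(p,q,r). p \<noteq> q \<and> p \<noteq> r \<and> q \<noteq> r \<and> arc (p,q,r) \<in> P}"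

definition is_hpath :: "'a hyperarc list \<Rightarrow> 'a set \<Rightarrow> 'a set \<Rightarrow> bool" where
  "is_hpath as u v \<longleftrightarrow> as \<noteq> [] \<and> distinct as \<and> tail (hd as) = u \<and> v \<in> heads (last as)
     \<and> (\<forall>k. Suc k < length as \<longrightarrow> tail (as ! Suc k) \<in> heads (as ! k))"

definition acyclic_hpath :: "'a hyperarc list \<Rightarrow> bool" where
  "acyclic_hpath as \<longleftrightarrow> (\<forall>k k'. k < length as \<and> k' < k \<longrightarrow> tail (as ! k') \<notin> heads (as ! k))"

datatype 'a tree = Leaf 'a | Node "'a tree" "'a tree"

fun leaves :: "'a tree \<Rightarrow> 'a list" where
  "leaves (Leaf a) = [a]"
| "leaves (Node l r) = leaves l @ leaves r"

text \<open>Leaf labels together with their positions (paths from the root, False = left).\<close>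
fun leafpos :: "'a tree \<Rightarrow> ('a \<times> bool list) set" where
  "leafpos (Leaf a) = {(a, [])}"
| "leafpos (Node l r) = (\<lambda>(a,p). (a, False # p)) ` leafpos l \<union> (\<lambda>(a,p). (a, True # p)) ` leafpos r"

definition phylo_tree :: "'a tree \<Rightarrow> bool" where
  "phylo_tree T \<longleftrightarrow> distinct (leaves T)"

text \<open>Nodes (positions) on the tree path between positions u and v:
  ancestors of u or v that are descendants of their lowest common ancestor.\<close>
definition tpath :: "bool list \<Rightarrow> bool list \<Rightarrow> bool list set" where
  "tpath u v = {w. (prefix w u \<or> prefix w v) \<and> (\<forall>z. prefix z u \<and> prefix z v \<longrightarrow> prefix z w)}"

definition rootpath :: "bool list \<Rightarrow> bool list set" where
  "rootpath u = {w. prefix w u}"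

definition displays :: "'a tree \<Rightarrow> 'a triple \<Rightarrow> bool" where
  "displays T t = (case t of (p,q,r) \<Rightarrow>
     (\<exists>up uq ur. (p,up) \<in> leafpos T \<and> (q,uq) \<in> leafpos T \<and> (r,ur) \<in> leafpos T
        \<and> tpath up uq \<inter> rootpath ur = {}))"

definition entails :: "'a triple set \<Rightarrow> 'a triple \<Rightarrow> bool" where
  "entails S t \<longleftrightarrow> (\<forall>T. phylo_tree T \<longrightarrow> (\<forall>s\<in>S. displays T s) \<longrightarrow> displays T t)"

text \<open>A clause is a set of literals (i, True) = x_i, (i, False) = not x_i.\<close>

definition R_var :: "nat \<Rightarrow> nat \<Rightarrow> leaf triple set" where
  "R_var n m = (\<Union>i\<in>{1..n}.
      {(B i, B' i, X i 1), (B' i, X i 1, Y i 1)}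
    \<union> (\<Union>j\<in>{1..m-1}. {(X i j, Y i j, X i (j+1)), (Y i j, X i (j+1), Y i (j+1))})
    \<union> {(X i m, Y i m, B (i+1)), (Y i m, B (i+1), B' (i+1))})"

definition R_negvar :: "nat \<Rightarrow> nat \<Rightarrow> leaf triple set" where
  "R_negvar n m = (\<Union>i\<in>{1..n}.
      {(B i, B' i, XB i 1), (B' i, XB i 1, YB i 1)}
    \<union> (\<Union>j\<in>{1..m-1}. {(XB i j, YB i j, XB i (j+1)), (YB i j, XB i (j+1), YB i (j+1))})
    \<union> {(XB i m, YB i m, B (i+1)), (XB i m, B (i+1), B' (i+1))})"

definition R_clause :: "nat \<Rightarrow> (nat \<Rightarrow> (nat \<times> bool) set) \<Rightarrow> leaf triple set" where
  "R_clause m Cl = (\<Union>j\<in>{1..m}.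
      (\<Union>i\<in>{i. (i, True) \<in> Cl j}.
         {(Cc j, D j, X i j), (Cc j, X i j, Y i j), (Cc j, Y i j, Cc (j+1))})
    \<union> (\<Union>i\<in>{i. (i, False) \<in> Cl j}.
         {(Cc j, D j, XB i j), (Cc j, XB i j, YB i j), (Cc j, YB i j, Cc (j+1))})
    \<union> (if j < m then {(Cc j, Cc (j+1), D (j+1))} else {}))"

definition R_conn :: "nat \<Rightarrow> nat \<Rightarrow> leaf triple set" where
  "R_conn n m = {(Alpha, Beta, B 1), (Beta, B 1, B' 1), (B (n+1), B' (n+1), Cc 1),
                 (B' (n+1), Cc 1, D 1), (Cc m, Cc (m+1), Gamma)}"

definition R_constr :: "nat \<Rightarrow> nat \<Rightarrow> (nat \<Rightarrow> (nat \<times> bool) set) \<Rightarrow> leaf triple set" where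
  "R_constr n m Cl = R_var n m \<union> R_negvar n m \<union> R_clause m Cl \<union> R_conn n m"

definition A_constr :: "nat \<Rightarrow> nat \<Rightarrow> (nat \<Rightarrow> (nat \<times> bool) set) \<Rightarrow> leaf hyperarc set" where
  "A_constr n m Cl = arc ` R_constr n m Cl"

end

theory Submission
  imports Defs
begin

text \<open>Read positions in a tree as nodes: a triple pq|r is displayed exactly when some
  common ancestor of p and q is not an ancestor of r. For the arc of a displayed triple
  pq|r, the common ancestors of p and r (resp. of q and r) are therefore common ancestors of
  p and q: walking along a path of such arcs, the set of common ancestors of the current
  tail only shrinks. The last arc of the path must be that of c_m c_(m+1)|\<gamma>, the only triple
  mentioning \<gamma>; a common ancestor of c_m and c_(m+1) outside the root path of \<gamma> is then also
  a common ancestor of \<alpha> and \<beta>, so \<alpha>\<beta>|\<gamma> is displayed. Neither the acyclicity of the path nor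
  the shape of the clauses plays a role.\<close>

definition ancestors :: "'a tree \<Rightarrow> 'a \<Rightarrow> bool list set" where
  "ancestors T x = {w. \<exists>u. (x, u) \<in> leafpos T \<and> prefix w u}"

definition common_ancestors :: "'a tree \<Rightarrow> 'a set \<Rightarrow> bool list set" where
  "common_ancestors T U = (\<Inter>x\<in>U. ancestors T x)"

lemma in_leaves_iff_leafpos: "x \<in> set (leaves T) \<longleftrightarrow> (\<exists>u. (x, u) \<in> leafpos T)"
  by (induction T) auto

lemma leafpos_unique:
  assumes "phylo_tree T" and "(x, u) \<in> leafpos T" and "(x, u') \<in> leafpos T"
  shows "u = u'"
  using assms unfolding phylo_tree_def
proof (induction T arbitrary: u u')
  case (Leaf a)
  then show ?case by simp
next
  case (Node l r)
  have "set (leaves l) \<inter> set (leaves r) = {}"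
    using Node.prems(1) by simp
  then have "x \<notin> set (leaves l) \<or> x \<notin> set (leaves r)"
    by blast
  then show ?case
    using Node by (auto simp: in_leaves_iff_leafpos)
qed

lemma ancestors_prefix_closed: "w \<in> ancestors T x \<Longrightarrow> prefix v w \<Longrightarrow> v \<in> ancestors T x"
  unfolding ancestors_def using prefix_order.trans by blast

lemma ancestors_linear:
  assumes "phylo_tree T" and "v \<in> ancestors T x" and "w \<in> ancestors T x"
  shows "prefix v w \<or> prefix w v"
proof -
  obtain u u' where "(x, u) \<in> leafpos T" "prefix v u" "(x, u') \<in> leafpos T" "prefix w u'"
    using assms(2,3) unfolding ancestors_def by blast
  then show ?thesis
    using leafpos_unique[OF assms(1)] prefix_same_cases by blast
qed

lemma tpath_rootpath_disjoint_iff: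
  "tpath u v \<inter> rootpath w = {} \<longleftrightarrow> (\<exists>z. prefix z u \<and> prefix z v \<and> \<not> prefix z w)"
proof
  assume disjoint: "tpath u v \<inter> rootpath w = {}"
  let ?z = "longest_common_prefix u v"
  have "?z \<in> tpath u v"
    unfolding tpath_def
    using longest_common_prefix_prefix1 longest_common_prefix_max_prefix by blast
  with disjoint have "\<not> prefix ?z w"
    unfolding rootpath_def by blast
  then show "\<exists>z. prefix z u \<and> prefix z v \<and> \<not> prefix z w"
    using longest_common_prefix_prefix1 longest_common_prefix_prefix2 by blast
next
  assume "\<exists>z. prefix z u \<and> prefix z v \<and> \<not> prefix z w"
  then obtain z where "prefix z u" "prefix z v" "\<not> prefix z w"
    by blast
  then show "tpath u v \<inter> rootpath w = {}"
    unfolding tpath_def rootpath_def using prefix_order.trans by blast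
qed

lemma displays_iff_ancestors:
  assumes "phylo_tree T"
  shows "displays T (p, q, r) \<longleftrightarrow>
    r \<in> set (leaves T) \<and> \<not> ancestors T p \<inter> ancestors T q \<subseteq> ancestors T r"
proof
  assume "displays T (p, q, r)"
  then obtain up uq ur z where pos: "(p, up) \<in> leafpos T" "(q, uq) \<in> leafpos T" "(r, ur) \<in> leafpos T"
    and z: "prefix z up" "prefix z uq" "\<not> prefix z ur"
    unfolding displays_def tpath_rootpath_disjoint_iff by auto
  have "z \<notin> ancestors T r"
  proof
    assume "z \<in> ancestors T r"
    then obtain u where "(r, u) \<in> leafpos T" "prefix z u"
      unfolding ancestors_def by blast
    with pos(3) z(3) show False
      using leafpos_unique[OF assms] by blast
  qed
  moreover have "z \<in> ancestors T p \<inter> ancestors T q"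
    using pos(1,2) z(1,2) unfolding ancestors_def by blast
  moreover have "r \<in> set (leaves T)"
    using pos(3) by (auto simp: in_leaves_iff_leafpos)
  ultimately show "r \<in> set (leaves T) \<and> \<not> ancestors T p \<inter> ancestors T q \<subseteq> ancestors T r"
    by blast
next
  assume r_z: "r \<in> set (leaves T) \<and> \<not> ancestors T p \<inter> ancestors T q \<subseteq> ancestors T r"
  then obtain ur where r: "(r, ur) \<in> leafpos T"
    by (auto simp: in_leaves_iff_leafpos)
  obtain z where z: "z \<in> ancestors T p" "z \<in> ancestors T q" "z \<notin> ancestors T r"
    using r_z by blast
  from z(1,2) obtain up uq where "(p, up) \<in> leafpos T" "prefix z up" "(q, uq) \<in> leafpos T" "prefix z uq"
    unfolding ancestors_def by blast
  moreover have "\<not> prefix z ur"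
    using r z(3) unfolding ancestors_def by blast
  ultimately show "displays T (p, q, r)"
    unfolding displays_def tpath_rootpath_disjoint_iff using r by auto
qed

text \<open>The witness z for pq|r and any common ancestor w of p and r are both ancestors of p,
  hence comparable; z below w would make z an ancestor of r.\<close>
lemma displays_common_ancestors_mono:
  assumes "phylo_tree T" and "displays T (p, q, r)"
  shows "ancestors T p \<inter> ancestors T r \<subseteq> ancestors T p \<inter> ancestors T q"
proof
  fix w assume w: "w \<in> ancestors T p \<inter> ancestors T r"
  have "\<not> ancestors T p \<inter> ancestors T q \<subseteq> ancestors T r"
    using assms by (simp add: displays_iff_ancestors)
  then obtain z where z: "z \<in> ancestors T p" "z \<in> ancestors T q" "z \<notin> ancestors T r"
    by blast
  have "\<not> prefix z w"
    using w z(3) ancestors_prefix_closed[of w T r z] by blast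
  then have "prefix w z"
    using ancestors_linear[OF assms(1) z(1), of w] w by blast
  then show "w \<in> ancestors T p \<inter> ancestors T q"
    using w z(2) ancestors_prefix_closed[of z T q w] by blast
qed

lemma displays_swap: "displays T (p, q, r) \<longleftrightarrow> displays T (q, p, r)"
  by (auto simp: displays_def tpath_rootpath_disjoint_iff)

lemma common_ancestors_heads_arc:
  assumes "phylo_tree T" and "displays T t" and "h \<in> heads (arc t)"
  shows "common_ancestors T h \<subseteq> common_ancestors T (tail (arc t))"
proof -
  obtain p q r where t: "t = (p, q, r)"
    by (cases t) auto
  have pqr: "displays T (p, q, r)"
    using assms(2) unfolding t .
  then have qpr: "displays T (q, p, r)"
    by (rule displays_swap[THEN iffD1])
  have "ancestors T p \<inter> ancestors T r \<subseteq> ancestors T p \<inter> ancestors T q"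
    using displays_common_ancestors_mono[OF assms(1) pqr] .
  moreover have "ancestors T q \<inter> ancestors T r \<subseteq> ancestors T q \<inter> ancestors T p"
    using displays_common_ancestors_mono[OF assms(1) qpr] .
  ultimately show ?thesis
    using assms(3) unfolding t arc_def heads_def tail_def common_ancestors_def by auto
qed

lemma hpath_common_ancestors_mono:
  assumes "phylo_tree T" and "is_hpath as u v"
    and "\<forall>a\<in>set as. \<exists>t. a = arc t \<and> displays T t"
  shows "common_ancestors T (tail (last as)) \<subseteq> common_ancestors T u"
proof -
  have nonempty: "as \<noteq> []" and first: "tail (hd as) = u"
    and linked: "\<And>k. Suc k < length as \<Longrightarrow> tail (as ! Suc k) \<in> heads (as ! k)"
    using assms(2) unfolding is_hpath_def by blast+
  have "common_ancestors T (tail (as ! k)) \<subseteq> common_ancestors T u" if "k < length as" for k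
    using that
  proof (induction k)
    case 0
    then show ?case
      using first nonempty by (simp add: hd_conv_nth)
  next
    case (Suc k)
    then have "as ! k \<in> set as"
      by simp
    with assms(3) obtain t where t: "as ! k = arc t" "displays T t"
      by blast
    have "common_ancestors T (tail (as ! Suc k)) \<subseteq> common_ancestors T (tail (as ! k))"
      using common_ancestors_heads_arc[OF assms(1) t(2)] linked[OF Suc.prems] unfolding t(1) by blast
    then show ?case
      using Suc by simp
  qed
  then show ?thesis
    using nonempty by (simp add: last_conv_nth)
qed

lemma hpath_entails:
  assumes "is_hpath as {a, b} v" and "set as \<subseteq> arc ` S"
    and "last as = arc (p, q, r)" and "(p, q, r) \<in> S"
  shows "entails S (a, b, r)"
  unfolding entails_def
proof (intro allI impI)
  fix T assume T: "phylo_tree T" and displayed: "\<forall>s\<in>S. displays T s"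
  have "\<forall>x\<in>set as. \<exists>t. x = arc t \<and> displays T t"
    using assms(2) displayed by blast
  then have "common_ancestors T {p, q} \<subseteq> common_ancestors T {a, b}"
    using hpath_common_ancestors_mono[OF T assms(1)] assms(3)
    by (simp add: arc_def tail_def)
  then have below: "ancestors T p \<inter> ancestors T q \<subseteq> ancestors T a \<inter> ancestors T b"
    by (simp add: common_ancestors_def)
  have "displays T (p, q, r)"
    using assms(4) displayed by blast
  then have "r \<in> set (leaves T)" and "\<not> ancestors T p \<inter> ancestors T q \<subseteq> ancestors T r"
    by (simp_all add: displays_iff_ancestors[OF T])
  with below have "r \<in> set (leaves T) \<and> \<not> ancestors T a \<inter> ancestors T b \<subseteq> ancestors T r"
    by blast
  then show "displays T (a, b, r)"
    by (simp add: displays_iff_ancestors[OF T])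
qed

lemma R_constr_distinct: "(p, q, r) \<in> R_constr n m Cl \<Longrightarrow> p \<noteq> q \<and> p \<noteq> r \<and> q \<noteq> r"
  unfolding R_constr_def R_var_def R_negvar_def R_clause_def R_conn_def
  by (auto split: if_splits)

lemma R_constr_Gamma:
  "(p, q, r) \<in> R_constr n m Cl \<Longrightarrow> Gamma \<in> {p, q, r} \<Longrightarrow> (p, q, r) = (Cc m, Cc (m+1), Gamma)"
  unfolding R_constr_def R_var_def R_negvar_def R_clause_def R_conn_def
  by (auto split: if_splits)

lemma arcs_subset_arc_triples:
  assumes "P \<subseteq> A_constr n m Cl"
  shows "P \<subseteq> arc ` triples P"
proof
  fix a assume "a \<in> P"
  with assms obtain p q r where "(p, q, r) \<in> R_constr n m Cl" "a = arc (p, q, r)"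
    unfolding A_constr_def by auto
  with \<open>a \<in> P\<close> have "(p, q, r) \<in> triples P"
    using R_constr_distinct unfolding triples_def by blast
  with \<open>a = arc (p, q, r)\<close> show "a \<in> arc ` triples P"
    by blast
qed

lemma arc_into_Gamma:
  assumes "a \<in> A_constr n m Cl" and "{Cc (m+1), Gamma} \<in> heads a"
  shows "a = arc (Cc m, Cc (m+1), Gamma)"
proof -
  obtain p q r where t: "(p, q, r) \<in> R_constr n m Cl" "a = arc (p, q, r)"
    using assms(1) unfolding A_constr_def by auto
  then have "Gamma \<in> {p, q, r}"
    using assms(2) unfolding arc_def heads_def by (auto simp: doubleton_eq_iff)
  then show ?thesis
    using R_constr_Gamma t by metis
qed

theorem lemma3:
  fixes n m :: nat and Cl :: "nat \<Rightarrow> (nat \<times> bool) set" and P :: "leaf hyperarc set"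
  assumes "n \<ge> 1" and "m \<ge> 1"
    and "\<forall>j\<in>{1..m}. card (Cl j) \<in> {2, 3} \<and> (\<forall>(i, s)\<in>Cl j. i \<in> {1..n})"
    and "P \<subseteq> A_constr n m Cl"
    and "\<exists>as. set as = P \<and> is_hpath as {Alpha, Beta} {Cc (m+1), Gamma} \<and> acyclic_hpath as"
  shows "entails (triples P) (Alpha, Beta, Gamma)"
proof -
  obtain as where as: "set as = P" "is_hpath as {Alpha, Beta} {Cc (m+1), Gamma}"
    using assms(5) by blast
  then have "last as \<in> P" and "{Cc (m+1), Gamma} \<in> heads (last as)"
    unfolding is_hpath_def by auto
  then have last_arc: "last as = arc (Cc m, Cc (m+1), Gamma)"
    using arc_into_Gamma assms(4) by blast
  have "(Cc m, Cc (m+1), Gamma) \<in> triples P"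
    using \<open>last as \<in> P\<close> unfolding last_arc triples_def by simp
  then show ?thesis
    using hpath_entails[OF as(2) _ last_arc] arcs_subset_arc_triples[OF assms(4)] as(1) by blast
qed

end
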